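(* None of seriality, reflexivity, Euclideanity and convergency is definable in $\mathcal{L}(\nabla,\bullet)$: for each of these properties $P$ there is no formula $\phi\in\mathcal{L}(\nabla,\bullet)$ such that for every frame $\mathcal{F}$, $\mathcal{F}\vDash\phi$ iff $\mathcal{F}$ has property $P$.
   Context: Fix a nonempty set $\mathbf{P}$ of propositional variables. $\mathcal{L}(\nabla,\bullet)$: $\phi::=p\mid\neg\phi\mid\phi\land\phi\mid\nabla\phi\mid\bullet\phi$. A frame is $\langle S,R\rangle$ with $S\neq\emptyset$, $R\subseteq S\times S$; a model based on it adds $V:\mathbf{P}\to\mathcal{P}(S)$. Truth: $\mathcal{M},s\vDash\nabla\phi$ iff there are $t,u$ with $sRt$, $sRu$, $\mathcal{M},t\vDash\phi$, $\mathcal{M},u\nvDash\phi$; $\mathcal{M},s\vDash\bullet\phi$ iff $\mathcal{M},s\vDash\phi$ and there is $t$ with $sRt$, $\mathcal{M},t\nvDash\phi$. $\mathcal{F}\vDash\phi$ means $\phi$ is true at every state of every model based on $\mathcal{F}$. Seriality: every state has an $R$-successor; reflexivity: $xRx$ for all $x$; Euclideanity: $xRy\land xRz\Rightarrow yRz$; convergency: $xRy\land xRz\Rightarrow\exists w(yRw\land zRw)$. *)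

theory Defs
  imports Main
begin

datatype 'p form = Atom 'p | Neg "'p form" | Conj "'p form" "'p form"
  | Nabla "'p form" | Bullet "'p form"

fun sat :: "'s set \<Rightarrow> ('s \<Rightarrow> 's \<Rightarrow> bool) \<Rightarrow> ('p \<Rightarrow> 's set) \<Rightarrow> 's \<Rightarrow> 'p form \<Rightarrow> bool" where
  "sat S R V s (Atom p) = (s \<in> V p)"
| "sat S R V s (Neg f) = (\<not> sat S R V s f)"
| "sat S R V s (Conj f g) = (sat S R V s f \<and> sat S R V s g)"
| "sat S R V s (Nabla f) = (\<exists>t\<in>S. \<exists>u\<in>S. R s t \<and> R s u \<and> sat S R V t f \<and> \<not> sat S R V u f)"
| "sat S R V s (Bullet f) = (sat S R V s f \<and> (\<exists>t\<in>S. R s t \<and> \<not> sat S R V t f))"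

definition is_frame :: "'s set \<Rightarrow> ('s \<Rightarrow> 's \<Rightarrow> bool) \<Rightarrow> bool" where
  "is_frame S R \<longleftrightarrow> S \<noteq> {} \<and> (\<forall>x y. R x y \<longrightarrow> x \<in> S \<and> y \<in> S)"

definition frame_valid :: "'s set \<Rightarrow> ('s \<Rightarrow> 's \<Rightarrow> bool) \<Rightarrow> 'p form \<Rightarrow> bool" where
  "frame_valid S R f \<longleftrightarrow> (\<forall>V :: 'p \<Rightarrow> 's set. (\<forall>p. V p \<subseteq> S) \<longrightarrow> (\<forall>s\<in>S. sat S R V s f))"

definition serial :: "'s set \<Rightarrow> ('s \<Rightarrow> 's \<Rightarrow> bool) \<Rightarrow> bool" where
  "serial S R \<longleftrightarrow> (\<forall>x\<in>S. \<exists>y\<in>S. R x y)"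

definition reflexive :: "'s set \<Rightarrow> ('s \<Rightarrow> 's \<Rightarrow> bool) \<Rightarrow> bool" where
  "reflexive S R \<longleftrightarrow> (\<forall>x\<in>S. R x x)"

definition euclidean :: "'s set \<Rightarrow> ('s \<Rightarrow> 's \<Rightarrow> bool) \<Rightarrow> bool" where
  "euclidean S R \<longleftrightarrow> (\<forall>x\<in>S. \<forall>y\<in>S. \<forall>z\<in>S. R x y \<and> R x z \<longrightarrow> R y z)"

definition convergent :: "'s set \<Rightarrow> ('s \<Rightarrow> 's \<Rightarrow> bool) \<Rightarrow> bool" where
  "convergent S R \<longleftrightarrow> (\<forall>x\<in>S. \<forall>y\<in>S. \<forall>z\<in>S. R x y \<and> R x z \<longrightarrow> (\<exists>w\<in>S. R y w \<and> R z w))"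

definition definable :: "'p itself \<Rightarrow> (nat set \<Rightarrow> (nat \<Rightarrow> nat \<Rightarrow> bool) \<Rightarrow> bool) \<Rightarrow> bool" where
  "definable (_ :: 'p itself) P \<longleftrightarrow> (\<exists>f :: 'p form. \<forall>S R. is_frame S R \<longrightarrow> (frame_valid S R f \<longleftrightarrow> P S R))"

end

theory Submission
  imports Defs
begin

text \<open>
  Both \<nabla>\<phi> and \<bullet>\<phi> need, at a state s, a successor refuting something true elsewhere
  (at another successor, resp. at s itself). A state whose only successor is itself offers
  no such witness, so it satisfies the same formulas as a dead end. Adding a loop at each dead
  end therefore preserves frame validity, while it turns a non-serial, non-reflexive one-point
  frame into a serial and reflexive one, and the non-Euclidean, non-convergent frame 0 \<rightarrow> 1
  into a Euclidean and convergent one.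
\<close>

definition loop_dead_ends :: "'s set \<Rightarrow> ('s \<Rightarrow> 's \<Rightarrow> bool) \<Rightarrow> 's \<Rightarrow> 's \<Rightarrow> bool" where
  "loop_dead_ends S R x y \<longleftrightarrow> R x y \<or> (x = y \<and> x \<in> S \<and> (\<forall>z\<in>S. \<not> R x z))"

lemma is_frame_loop_dead_ends: "is_frame S R \<Longrightarrow> is_frame S (loop_dead_ends S R)"
  by (auto simp: is_frame_def loop_dead_ends_def)

lemma sat_loop_dead_ends: "sat S (loop_dead_ends S R) V s f = sat S R V s f"
proof (induction f arbitrary: s)
  case (Nabla f)
  show ?case
    by (cases "\<exists>z\<in>S. R s z") (use Nabla in \<open>auto simp: loop_dead_ends_def\<close>)
next
  case (Bullet f)
  show ?case
    by (cases "\<exists>z\<in>S. R s z") (use Bullet in \<open>auto simp: loop_dead_ends_def\<close>)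
qed simp_all

lemma frame_valid_loop_dead_ends: "frame_valid S (loop_dead_ends S R) f = frame_valid S R f"
  by (simp add: frame_valid_def sat_loop_dead_ends)

lemma definable_invariant_loop_dead_ends:
  assumes "definable TYPE('p) P" and "is_frame S R"
  shows "P S (loop_dead_ends S R) = P S R"
proof -
  from assms(1) obtain f :: "'p form"
    where f: "\<And>S R. is_frame S R \<Longrightarrow> frame_valid S R f = P S R"
    unfolding definable_def by blast
  show ?thesis
    using f[OF is_frame_loop_dead_ends[OF assms(2)]] f[OF assms(2)]
    by (simp add: frame_valid_loop_dead_ends)
qed

theorem corollary1:
  shows "\<not> definable TYPE('p) serial \<and> \<not> definable TYPE('p) reflexive
       \<and> \<not> definable TYPE('p) euclidean \<and> \<not> definable TYPE('p) convergent"
proof -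
  define R\<^sub>1 :: "nat \<Rightarrow> nat \<Rightarrow> bool" where "R\<^sub>1 x y \<longleftrightarrow> False" for x y
  define R\<^sub>2 :: "nat \<Rightarrow> nat \<Rightarrow> bool" where "R\<^sub>2 x y \<longleftrightarrow> x = 0 \<and> y = 1" for x y
  have frames: "is_frame {0} R\<^sub>1" "is_frame {0, 1} R\<^sub>2"
    by (auto simp: is_frame_def R\<^sub>1_def R\<^sub>2_def)
  have loops\<^sub>1: "loop_dead_ends {0} R\<^sub>1 x y \<longleftrightarrow> x = 0 \<and> y = 0" for x y
    by (auto simp: loop_dead_ends_def R\<^sub>1_def)
  have loops\<^sub>2: "loop_dead_ends {0, 1} R\<^sub>2 x y \<longleftrightarrow> y = 1 \<and> (x = 0 \<or> x = 1)" for x y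
    by (auto simp: loop_dead_ends_def R\<^sub>2_def)
  show ?thesis
  proof (intro conjI notI)
    assume "definable TYPE('p) serial"
    from definable_invariant_loop_dead_ends[OF this frames(1)] show False
      unfolding loops\<^sub>1 unfolding serial_def R\<^sub>1_def by simp
  next
    assume "definable TYPE('p) reflexive"
    from definable_invariant_loop_dead_ends[OF this frames(1)] show False
      unfolding loops\<^sub>1 unfolding reflexive_def R\<^sub>1_def by simp
  next
    assume "definable TYPE('p) euclidean"
    from definable_invariant_loop_dead_ends[OF this frames(2)] show False
      unfolding loops\<^sub>2 unfolding euclidean_def R\<^sub>2_def by simp
  next
    assume "definable TYPE('p) convergent"
    from definable_invariant_loop_dead_ends[OF this frames(2)] show False
      unfolding loops\<^sub>2 unfolding convergent_def R\<^sub>2_def by simp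
  qed
qed

end
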